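(* Let $0<c_1\le c_2$ be constants, let $n$ be sufficiently large, let $t\in[1,n^{0.1}]$, and let $H$ be an undirected graph on $n$ vertices in which every vertex has degree between $c_1t$ and $c_2t$ and which has no cycle of length at most $8$. Then for any two vertices $u,v$ of $H^2$, the number of paths of length $2$ in $H^2$ connecting $u$ and $v$ is $O(t)$, where the implied constant depends only on $c_1,c_2$.
   Context: $H^2$ (the square of $H$) is the graph on the vertex set of $H$ in which $u\neq v$ are adjacent if and only if there is a path of length exactly $2$ between $u$ and $v$ in $H$. *)

theory Defs
  imports Complex_Main
begin

definition simple_graph :: "'a set \<Rightarrow> ('a \<Rightarrow> 'a \<Rightarrow> bool) \<Rightarrow> bool" where
  "simple_graph V E \<longleftrightarrow> finite V \<and> (\<forall>x y. E x y \<longrightarrow> x \<in> V \<and> y \<in> V)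
     \<and> (\<forall>x y. E x y \<longrightarrow> E y x) \<and> (\<forall>x. \<not> E x x)"

definition degree :: "'a set \<Rightarrow> ('a \<Rightarrow> 'a \<Rightarrow> bool) \<Rightarrow> 'a \<Rightarrow> nat" where
  "degree V E v = card {w \<in> V. E v w}"

definition has_cycle_of_length :: "'a set \<Rightarrow> ('a \<Rightarrow> 'a \<Rightarrow> bool) \<Rightarrow> nat \<Rightarrow> bool" where
  "has_cycle_of_length V E k \<longleftrightarrow> k \<ge> 3 \<and> (\<exists>xs. length xs = k \<and> distinct xs \<and> set xs \<subseteq> V
     \<and> (\<forall>i<k. E (xs ! i) (xs ! ((i + 1) mod k))))"

definition sq_adj :: "'a set \<Rightarrow> ('a \<Rightarrow> 'a \<Rightarrow> bool) \<Rightarrow> 'a \<Rightarrow> 'a \<Rightarrow> bool" where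
  "sq_adj V E u v \<longleftrightarrow> u \<noteq> v \<and> (\<exists>w\<in>V. E u w \<and> E w v)"

definition num_paths2 :: "'a set \<Rightarrow> ('a \<Rightarrow> 'a \<Rightarrow> bool) \<Rightarrow> 'a \<Rightarrow> 'a \<Rightarrow> nat" where
  "num_paths2 V R u v = card {w \<in> V. w \<noteq> u \<and> w \<noteq> v \<and> R u w \<and> R w v}"

end

(* H has no cycle of length at most 8, so two vertices have at most one common neighbour
   and a common neighbour w of u and v in H^2 is reached by a path u-a-w-b-v.  If u and v
   have a common neighbour c in H, then a or b is c, since otherwise u-a-w-b-v-c is a
   6-cycle; so w is a neighbour of c and there are at most deg c <= c2 t such w.  If they
   have none, two such w would give two u-v paths of length 4 that close up into a cycle of
   length 4, 6 or 8; so there is at most one. *)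
theory Submission
  imports Defs
begin

lemma has_cycle_of_lengthI:
  assumes "simple_graph V E" and "distinct xs" and "3 \<le> length xs"
    and "successively E xs" and "E (last xs) (hd xs)"
  shows "has_cycle_of_length V E (length xs)"
proof -
  have step: "E (xs ! i) (xs ! ((i + 1) mod length xs))" if "i < length xs" for i
  proof (cases "Suc i < length xs")
    case True
    then show ?thesis using successively_nth[OF assms(4)] by simp
  next
    case False
    with that have "i = length xs - 1" by simp
    moreover have "xs \<noteq> []" using assms(3) by auto
    ultimately show ?thesis using assms(5) by (simp add: last_conv_nth hd_conv_nth)
  qed
  have "set xs \<subseteq> V"
  proof
    fix x assume "x \<in> set xs"
    then obtain i where "i < length xs" "x = xs ! i" by (auto simp: in_set_conv_nth)
    with step show "x \<in> V" using assms(1) unfolding simple_graph_def by blast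
  qed
  with assms(2,3) step show ?thesis unfolding has_cycle_of_length_def by blast
qed

locale short_cycle_free =
  fixes V :: "'a set" and E :: "'a \<Rightarrow> 'a \<Rightarrow> bool" and m :: nat
  assumes simple: "simple_graph V E"
    and no_cycle: "k \<le> m \<Longrightarrow> \<not> has_cycle_of_length V E k"
begin

lemma edge_sym: "E x y \<Longrightarrow> E y x"
  and edge_irrefl: "\<not> E x x"
  and edge_in_V: "E x y \<Longrightarrow> y \<in> V"
  using simple unfolding simple_graph_def by blast+

lemma closed_walk_not_distinct:
  assumes "successively E xs" and "E (last xs) (hd xs)" and "3 \<le> length xs" and "length xs \<le> m"
  shows "\<not> distinct xs"
  using has_cycle_of_lengthI[OF simple _ assms(3,1,2)] no_cycle[OF assms(4)] by blast

lemma no_triangle: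
  assumes "3 \<le> m" and "E x y" and "E y z"
  shows "\<not> E z x"
proof
  assume "E z x"
  with assms have "distinct [x, y, z]" using edge_irrefl by auto
  with assms \<open>E z x\<close> show False using closed_walk_not_distinct[of "[x, y, z]"] by simp
qed

lemma common_neighbour_unique:
  assumes "4 \<le> m" and "x \<noteq> z" and "E x a" "E a z" and "E x b" "E b z"
  shows "a = b"
proof (rule ccontr)
  assume "a \<noteq> b"
  with assms have "distinct [x, a, z, b]" using edge_irrefl by auto
  with assms show False using closed_walk_not_distinct[of "[x, a, z, b]"] edge_sym by simp
qed

lemma sq_adj_not_adjacent:
  assumes "3 \<le> m" and "sq_adj V E u w"
  shows "\<not> E u w"
  using assms no_triangle edge_sym unfolding sq_adj_def by blast

definition sq_common_nbrs :: "'a \<Rightarrow> 'a \<Rightarrow> 'a set" where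
  "sq_common_nbrs u v = {w \<in> V. w \<noteq> u \<and> w \<noteq> v \<and> sq_adj V E u w \<and> sq_adj V E w v}"

lemma sq_common_nbrsE:
  assumes "w \<in> sq_common_nbrs u v" and "3 \<le> m"
  obtains a b where "E u a" "E a w" "E w b" "E b v" "w \<noteq> u" "w \<noteq> v" "\<not> E u w" "\<not> E w v"
  using assms sq_adj_not_adjacent unfolding sq_common_nbrs_def sq_adj_def by blast

lemma sq_common_nbrs_subset_nbrs:
  assumes "6 \<le> m" and "u \<noteq> v" and "E u c" "E c v"
  shows "sq_common_nbrs u v \<subseteq> {w \<in> V. E c w}"
proof
  fix w assume "w \<in> sq_common_nbrs u v"
  then obtain a b where path: "E u a" "E a w" "E w b" "E b v"
    and w: "w \<noteq> u" "w \<noteq> v" "\<not> E u w" "\<not> E w v"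
    by (rule sq_common_nbrsE) (use assms(1) in simp_all)
  have "E c w"
  proof (rule ccontr)
    assume "\<not> E c w"
    then have "a \<noteq> c" "b \<noteq> c" using path edge_sym by auto
    have "4 \<le> m" using assms(1) by simp
    have "\<not> E a v" "\<not> E u b"
      using common_neighbour_unique[OF \<open>4 \<le> m\<close> \<open>u \<noteq> v\<close> _ _ assms(3,4)] path
        \<open>a \<noteq> c\<close> \<open>b \<noteq> c\<close> by blast+
    then have "distinct [u, a, w, b, v, c]"
      using assms path w \<open>a \<noteq> c\<close> \<open>b \<noteq> c\<close> \<open>\<not> E c w\<close> edge_irrefl edge_sym by auto
    with assms path show False using closed_walk_not_distinct[of "[u, a, w, b, v, c]"] edge_sym by simp
  qed
  then show "w \<in> {w \<in> V. E c w}" using edge_in_V by blast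
qed

lemma sq_common_nbrs_subsingleton:
  assumes "8 \<le> m" and "u \<noteq> v" and no_common: "\<And>c. E u c \<Longrightarrow> \<not> E c v"
  shows "card (sq_common_nbrs u v) \<le> 1"
proof -
  have "3 \<le> m" "4 \<le> m" using assms(1) by simp_all
  have "w = w'" if S: "w \<in> sq_common_nbrs u v" "w' \<in> sq_common_nbrs u v" for w w'
  proof (rule ccontr)
    assume "w \<noteq> w'"
    obtain a b where path: "E u a" "E a w" "E w b" "E b v"
      and w: "w \<noteq> u" "w \<noteq> v" "\<not> E u w" "\<not> E w v"
      using sq_common_nbrsE[OF S(1) \<open>3 \<le> m\<close>] by blast
    obtain a' b' where path': "E u a'" "E a' w'" "E w' b'" "E b' v"
      and w': "w' \<noteq> u" "w' \<noteq> v" "\<not> E u w'" "\<not> E w' v"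
      using sq_common_nbrsE[OF S(2) \<open>3 \<le> m\<close>] by blast
    have far: "\<not> E a v" "\<not> E u b" "\<not> E a' v" "\<not> E u b'"
      using no_common path path' by blast+
    note facts = path path' w w' far \<open>w \<noteq> w'\<close> \<open>u \<noteq> v\<close> edge_irrefl edge_sym
    show False
    proof (cases "a = a'"; cases "b = b'")
      assume "a = a'" "b = b'"
      with facts have "a \<noteq> b" by auto
      with \<open>a = a'\<close> \<open>b = b'\<close> path path' show False
        using common_neighbour_unique[OF \<open>4 \<le> m\<close> \<open>a \<noteq> b\<close>] \<open>w \<noteq> w'\<close> edge_sym by blast
    next
      assume "a = a'" "b \<noteq> b'"
      with facts have "distinct [a, w, b, v, b', w']" by auto
      with \<open>a = a'\<close> facts assms(1) show False
        using closed_walk_not_distinct[of "[a, w, b, v, b', w']"] by simp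
    next
      assume "a \<noteq> a'" "b = b'"
      with facts have "distinct [u, a, w, b, w', a']" by auto
      with \<open>b = b'\<close> facts assms(1) show False
        using closed_walk_not_distinct[of "[u, a, w, b, w', a']"] by simp
    next
      assume "a \<noteq> a'" "b \<noteq> b'"
      with facts have "distinct [u, a, w, b, v, b', w', a']" by auto
      with facts assms(1) show False
        using closed_walk_not_distinct[of "[u, a, w, b, v, b', w', a']"] by simp
    qed
  qed
  moreover have "finite (sq_common_nbrs u v)"
    using simple unfolding simple_graph_def sq_common_nbrs_def by simp
  ultimately show ?thesis by (simp add: card_le_Suc0_iff_eq)
qed

lemma card_sq_common_nbrs_le:
  assumes "8 \<le> m" and "u \<noteq> v" and deg: "\<And>x. x \<in> V \<Longrightarrow> real (degree V E x) \<le> D"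
  shows "real (card (sq_common_nbrs u v)) \<le> max D 1"
proof (cases "\<exists>c. E u c \<and> E c v")
  case True
  then obtain c where "E u c" "E c v" by blast
  have "card (sq_common_nbrs u v) \<le> card {w \<in> V. E c w}"
    using sq_common_nbrs_subset_nbrs[OF _ \<open>u \<noteq> v\<close> \<open>E u c\<close> \<open>E c v\<close>] assms(1) simple
    by (intro card_mono) (auto simp: simple_graph_def)
  also have "\<dots> = degree V E c" by (simp add: degree_def)
  finally show ?thesis using deg[OF edge_in_V[OF \<open>E u c\<close>]] by linarith
next
  case False
  then show ?thesis using sq_common_nbrs_subsingleton[OF assms(1,2)] by fastforce
qed

lemma num_paths2_sq_adj: "num_paths2 V (sq_adj V E) u v = card (sq_common_nbrs u v)"
  by (simp add: num_paths2_def sq_common_nbrs_def)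

end

theorem lemmaA5:
  fixes c1 c2 :: real
  assumes "0 < c1" and "c1 \<le> c2"
  shows "\<exists>C::real. \<exists>N::nat. \<forall>n\<ge>N. \<forall>t::real. \<forall>V::nat set. \<forall>E.
           1 \<le> t \<and> t \<le> real n powr 0.1 \<and>
           simple_graph V E \<and> card V = n \<and>
           (\<forall>v\<in>V. c1 * t \<le> real (degree V E v) \<and> real (degree V E v) \<le> c2 * t) \<and>
           (\<forall>k\<le>8. \<not> has_cycle_of_length V E k)
           \<longrightarrow> (\<forall>u\<in>V. \<forall>v\<in>V. u \<noteq> v \<longrightarrow> real (num_paths2 V (sq_adj V E) u v) \<le> C * t)"
proof (intro exI[of _ "c2 + 1"] exI[of _ 0] allI impI ballI)
  fix n :: nat and t :: real and V :: "nat set" and E and u v :: nat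
  assume hyps: "1 \<le> t \<and> t \<le> real n powr 0.1 \<and> simple_graph V E \<and> card V = n \<and>
      (\<forall>v\<in>V. c1 * t \<le> real (degree V E v) \<and> real (degree V E v) \<le> c2 * t) \<and>
      (\<forall>k\<le>8. \<not> has_cycle_of_length V E k)" and "u \<noteq> v"
  then interpret short_cycle_free V E 8 by unfold_locales auto
  have "real (num_paths2 V (sq_adj V E) u v) \<le> max (c2 * t) 1"
    unfolding num_paths2_sq_adj using card_sq_common_nbrs_le[OF _ \<open>u \<noteq> v\<close>] hyps by simp
  also have "\<dots> \<le> (c2 + 1) * t"
  proof -
    have "1 \<le> t" "0 \<le> c2 * t" using hyps assms by auto
    then show ?thesis by (simp add: algebra_simps)
  qed
  finally show "real (num_paths2 V (sq_adj V E) u v) \<le> (c2 + 1) * t" .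
qed

end
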